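(* Let $q=3^m$ with $m\ge1$ and $f(x)=x^{q+2}$ on $\mathbb{F}_{q^2}$. Then $$\sum_{a\in\mathbb{F}_{q^2},\,b\in\mathbb{F}_{q^2}^*}\big(W_f(a,b)-1\big)^3=q^2(q^2-1)(q^3-3q^2+2).$$
   Context: The Walsh transform is $W_f(a,b)=\sum_{x\in\mathbb{F}_{q^2}}\xi_3^{\mathrm{Tr}_{\mathbb{F}_{q^2}/\mathbb{F}_3}(bf(x)-ax)}$ with $\xi_3=e^{2\pi i/3}$ and $\mathrm{Tr}_{\mathbb{F}_{q^2}/\mathbb{F}_3}$ the absolute trace. *)

theory Defs
  imports Complex_Main
begin

text \<open>The finite field F_{3^n} is modelled by a finite field type 'a with CARD('a) = 3^n
  (this determines the field up to isomorphism).  The absolute trace to F_3 is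
  Tr(x) = x + x^3 + ... + x^(3^(n-1)); its values lie in the prime field {0,1,2}.\<close>

definition abs_trace3 :: "nat \<Rightarrow> 'a::field \<Rightarrow> 'a" where
  "abs_trace3 n x = (\<Sum>i<n. x ^ (3 ^ i))"

definition xi3 :: complex where
  "xi3 = exp (2 * pi * \<i> / 3)"

definition xi3_pow :: "'a::field \<Rightarrow> complex" where
  "xi3_pow t = xi3 ^ (THE k. k < 3 \<and> of_nat k = t)"

definition walsh :: "nat \<Rightarrow> ('a::{field,finite} \<Rightarrow> 'a) \<Rightarrow> 'a \<Rightarrow> 'a \<Rightarrow> complex" where
  "walsh n f a b = (\<Sum>x\<in>UNIV. xi3_pow (abs_trace3 n (b * f x - a * x)))"

end

(*
  Let q = 3^m, N = q^2 = |F|, and let psi(x) = xi3^Tr(x) be the canonical additive character,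
  so that W_f(-,b) is the Fourier transform of x |-> psi(b f(x)).  Orthogonality of psi gives
  sum_a W = N psi(b f(0)), sum_a W^2 = N sum_x psi(b (f(x) + f(-x))) and
  sum_a W^3 = N sum_{x,y} psi(b (f(x) + f(y) + f(-x-y))).  For the odd function
  f(x) = x^(q+2) in characteristic 3 the first two equal N and N^2, and
  f(x) + f(y) + f(-x-y) = (x - y)(x^q y - x y^q), which vanishes exactly when y = 0 or
  x/y lies in the subfield F_q.  Summing over b therefore counts N + (N - 1) q such pairs,
  so sum_{a,b} W^3 = N^2 (N + (N - 1) q).  Expanding (W - 1)^3 and removing the column b = 0,
  where W(a,0) = N [a = 0], gives the stated value.
*)

theory Submission
  imports Defs "HOL-Computational_Algebra.Polynomial" "HOL-Number_Theory.Cong"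
begin

section \<open>Finite fields\<close>

lemma of_nat_card_UNIV_eq_0: "of_nat (card (UNIV :: 'a::{finite,ring_1} set)) = (0 :: 'a)"
proof -
  have "(\<Sum>x\<in>UNIV. x + 1) = (\<Sum>x\<in>(UNIV :: 'a set). x)"
    by (rule sum.reindex_bij_witness[of _ "\<lambda>x. x - 1" "\<lambda>x. x + 1"]) auto
  then show ?thesis
    by (simp add: sum.distrib)
qed

lemma CHAR_eq_if_card_UNIV_eq_prime_power:
  assumes "prime p" and "card (UNIV :: 'a::{field,finite} set) = p ^ n"
  shows "CHAR('a) = p"
proof -
  have "prime CHAR('a)"
    by (intro prime_CHAR_semidom finite_imp_CHAR_pos) simp
  moreover have "CHAR('a) dvd p ^ n"
    using of_nat_card_UNIV_eq_0[where 'a = 'a] assms(2) of_nat_eq_0_iff_char_dvd by metis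
  ultimately show ?thesis
    using assms(1) by (metis prime_dvd_power primes_dvd_imp_eq)
qed

lemma CHAR_eq_3_if_card_UNIV_eq_power:
  assumes "card (UNIV :: 'a::{field,finite} set) = 3 ^ n"
  shows "CHAR('a) = 3"
  using assms by (rule CHAR_eq_if_card_UNIV_eq_prime_power[rotated]) simp

(* The library's finite_field_power_card_eq_same requires the sort finite_field. *)
lemma power_card_UNIV_eq_same:
  fixes x :: "'a::{field,finite}"
  shows "x ^ card (UNIV :: 'a set) = x"
proof (cases "x = 0")
  case False
  have "x * (\<Prod>y\<in>UNIV-{0}. x * y) = x * x ^ (card (UNIV :: 'a set) - 1) * \<Prod>(UNIV-{0})"
    by (simp add: prod.distrib mult_ac card_Diff_singleton)
  also have "x * x ^ (card (UNIV :: 'a set) - 1) = x ^ card (UNIV :: 'a set)"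
    using finite_UNIV_card_ge_0[where 'a = 'a] by (simp flip: power_Suc)
  also have "(\<Prod>y\<in>UNIV-{0}. x * y) = (\<Prod>y\<in>UNIV-{0}. y)"
    by (rule prod.reindex_bij_witness[of _ "\<lambda>y. y / x" "\<lambda>y. x * y"]) (use False in auto)
  finally show ?thesis
    by simp
qed (use finite_UNIV_card_ge_0[where 'a = 'a] in auto)

lemma frobenius_diff:
  fixes x y :: "'a::comm_ring_1"
  assumes "prime CHAR('a)" and "q = CHAR('a) ^ k"
  shows "(x - y) ^ q = x ^ q - y ^ q"
proof -
  have "q > 0"
    using assms by (simp add: prime_gt_0_nat)
  then have "(- y) ^ q + y ^ q = 0"
    using freshmans_dream'[OF assms, of "- y" y] by (simp add: zero_power)
  then have "(- y) ^ q = - (y ^ q)"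
    by (simp add: eq_neg_iff_add_eq_0)
  then show ?thesis
    using freshmans_dream'[OF assms, of x "- y"] by simp
qed

lemma frobenius3_add:
  fixes x y :: "'a::comm_semiring_1"
  assumes "CHAR('a) = 3"
  shows "(x + y) ^ 3 ^ k = x ^ 3 ^ k + y ^ 3 ^ k"
  by (rule freshmans_dream') (simp_all add: assms)

lemma card_UNIV_eq_card_range_mult_card_kernel:
  fixes \<phi> :: "'a::{finite,ab_group_add} \<Rightarrow> 'b::ab_group_add"
  assumes add: "\<And>x y. \<phi> (x + y) = \<phi> x + \<phi> y"
  shows "card (UNIV :: 'a set) = card (range \<phi>) * card {x. \<phi> x = 0}"
proof -
  have diff: "\<phi> (x - y) = \<phi> x - \<phi> y" for x y
    using add[of y "x - y"] by (simp add: algebra_simps)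
  have fiber: "card {x. \<phi> x = \<phi> x0} = card {x. \<phi> x = 0}" for x0
  proof -
    have "x \<in> (\<lambda>k. x0 + k) ` {x. \<phi> x = 0}" if "\<phi> x = \<phi> x0" for x
      using that diff[of x x0] by (intro image_eqI[of _ _ "x - x0"]) auto
    then have "{x. \<phi> x = \<phi> x0} = (\<lambda>k. x0 + k) ` {x. \<phi> x = 0}"
      by (auto simp: add)
    then show ?thesis
      by (simp add: card_image)
  qed
  have "card (UNIV :: 'a set) = (\<Sum>y\<in>range \<phi>. card {x. \<phi> x = y})"
    using card_eq_sum sum.group[of UNIV "range \<phi>" \<phi> "\<lambda>_. 1 :: nat"] by simp
  also have "\<dots> = (\<Sum>y\<in>range \<phi>. card {x. \<phi> x = 0})"
    using fiber by (intro sum.cong) auto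
  finally show ?thesis
    by simp
qed

lemma card_roots_power_plus_linear_le:
  fixes c :: "'a::field"
  assumes "q \<ge> 2"
  shows "card {x. x ^ q + c * x = 0} \<le> q"
proof -
  define P :: "'a poly" where "P = monom 1 q + [:0, c:]"
  have "coeff P q = 1"
    using assms by (simp add: P_def coeff_pCons split: nat.split)
  then have "P \<noteq> 0"
    by auto
  have "degree P \<le> q"
    unfolding P_def using assms
    by (intro degree_add_le) (auto intro: degree_monom_le order.trans[OF degree_pCons_le])
  then show ?thesis
    using card_poly_roots_bound[OF \<open>P \<noteq> 0\<close>] by (simp add: P_def poly_monom algebra_simps)
qed

lemma card_kernel_eq_if_card_UNIV_eq_square:
  fixes \<phi> :: "'a::{finite,ab_group_add} \<Rightarrow> 'b::ab_group_add"
  assumes "\<And>x y. \<phi> (x + y) = \<phi> x + \<phi> y" and "card (UNIV :: 'a set) = q * q"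
    and "card (range \<phi>) \<le> q" and "card {x. \<phi> x = 0} \<le> q"
  shows "card {x. \<phi> x = 0} = q"
proof -
  have "q * q \<le> q * card {x. \<phi> x = 0}"
    using card_UNIV_eq_card_range_mult_card_kernel[of \<phi>] assms(1-3) by (metis mult_le_mono1)
  moreover have "q > 0"
    using assms(2) by (metis finite_UNIV_card_ge_0 finite mult_is_0 neq0_conv)
  ultimately show ?thesis
    using assms(4) nat_mult_le_cancel1 le_antisym by blast
qed

lemma card_fixed_points_power_eq:
  fixes p m :: nat
  assumes "prime p" and "m \<ge> 1" and card: "card (UNIV :: 'a::{field,finite} set) = p ^ (2 * m)"
  shows "card {t :: 'a. t ^ p ^ m = t} = p ^ m"
proof -
  let ?q = "p ^ m"
  have "CHAR('a) = p"
    using assms(1) card by (rule CHAR_eq_if_card_UNIV_eq_prime_power)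
  then have frob_add: "(x + y) ^ ?q = x ^ ?q + y ^ ?q" and frob_diff: "(x - y) ^ ?q = x ^ ?q - y ^ ?q"
    for x y :: 'a
    using assms(1) by (simp_all add: freshmans_dream' frobenius_diff)
  have "p ^ 1 \<le> ?q"
    using assms(1,2) by (intro power_increasing) (auto simp: prime_ge_Suc_0_nat)
  then have "?q \<ge> 2"
    using prime_ge_2_nat[OF assms(1)] by simp
  have card_q: "card (UNIV :: 'a set) = ?q * ?q"
    using card by (simp add: mult_2 power_add)
  \<comment> \<open>The kernel of \<open>\<phi>\<close> consists of roots of y^q - y,
    and its image of roots of y^q + y.\<close>
  define \<phi> :: "'a \<Rightarrow> 'a" where "\<phi> x = x ^ ?q - x" for x
  have "\<phi> x ^ ?q + 1 * \<phi> x = 0" for x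
  proof -
    have "(x ^ ?q) ^ ?q = x"
      using power_card_UNIV_eq_same[of x] by (simp add: card_q power_mult)
    moreover have "\<phi> x ^ ?q = (x ^ ?q) ^ ?q - x ^ ?q"
      by (simp only: \<phi>_def frob_diff)
    ultimately show ?thesis
      by (simp add: \<phi>_def)
  qed
  then have "card (range \<phi>) \<le> card {y :: 'a. y ^ ?q + 1 * y = 0}"
    by (intro card_mono) auto
  also have "\<dots> \<le> ?q"
    by (rule card_roots_power_plus_linear_le[OF \<open>?q \<ge> 2\<close>])
  finally have "card {x. \<phi> x = 0} = ?q"
    using card_roots_power_plus_linear_le[OF \<open>?q \<ge> 2\<close>, of "- 1"] card_q
    by (intro card_kernel_eq_if_card_UNIV_eq_square) (simp_all add: \<phi>_def frob_add)
  moreover have "{x. \<phi> x = 0} = {t. t ^ ?q = t}"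
    by (auto simp: \<phi>_def)
  ultimately show ?thesis
    by simp
qed

lemma card_power_mult_eq_mult_power:
  fixes p m :: nat and y :: "'a::{field,finite}"
  assumes "prime p" and "m \<ge> 1" and "card (UNIV :: 'a set) = p ^ (2 * m)"
  shows "card {x. x ^ p ^ m * y = x * y ^ p ^ m} = (if y = 0 then card (UNIV :: 'a set) else p ^ m)"
proof (cases "y = 0")
  case False
  let ?q = "p ^ m"
  have "{x. x ^ ?q * y = x * y ^ ?q} = (\<lambda>t. t * y) ` {t. t ^ ?q = t}"
  proof (intro set_eqI iffI)
    fix x
    assume "x \<in> {x. x ^ ?q * y = x * y ^ ?q}"
    then have "(x / y) ^ ?q = x / y"
      using False by (simp add: power_divide frac_eq_eq)
    then show "x \<in> (\<lambda>t. t * y) ` {t. t ^ ?q = t}"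
      using False by (intro image_eqI[of _ _ "x / y"]) auto
  qed (auto simp: power_mult_distrib)
  moreover have "inj (\<lambda>t. t * y)"
    using False by (auto intro: injI)
  ultimately show ?thesis
    using card_fixed_points_power_eq[OF assms] False by (simp add: card_image inj_on_subset)
qed (simp add: prime_gt_0_nat[OF assms(1)])

section \<open>The absolute trace and the canonical additive character\<close>

lemma abs_trace3_add:
  fixes x y :: "'a::field"
  assumes "CHAR('a) = 3"
  shows "abs_trace3 n (x + y) = abs_trace3 n x + abs_trace3 n y"
  unfolding abs_trace3_def by (simp add: frobenius3_add[OF assms] sum.distrib)

lemma abs_trace3_cube:
  fixes x :: "'a::{field,finite}"
  assumes "card (UNIV :: 'a set) = 3 ^ n"
  shows "abs_trace3 n x ^ 3 = abs_trace3 n x"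
proof -
  have "CHAR('a) = 3"
    using assms by (rule CHAR_eq_3_if_card_UNIV_eq_power)
  then have "abs_trace3 n x ^ 3 = (\<Sum>i<n. x ^ 3 ^ Suc i)"
    unfolding abs_trace3_def by (subst freshmans_dream_sum) (simp_all add: mult.commute flip: power_mult)
  also have "\<dots> = (\<Sum>i<Suc n. x ^ 3 ^ i) - x"
    by (subst sum.lessThan_Suc_shift) simp
  also have "\<dots> = abs_trace3 n x"
    using power_card_UNIV_eq_same[of x] assms by (simp add: abs_trace3_def)
  finally show ?thesis .
qed

lemma abs_trace3_in_prime_field:
  fixes x :: "'a::{field,finite}"
  assumes "card (UNIV :: 'a set) = 3 ^ n"
  obtains k where "k < 3" and "abs_trace3 n x = of_nat k"
proof -
  let ?t = "abs_trace3 n x"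
  have "?t * (?t - 1) * (?t + 1) = ?t ^ 3 - ?t"
    by (simp add: power3_eq_cube algebra_simps)
  then have "?t = 0 \<or> ?t = 1 \<or> ?t = -1"
    using abs_trace3_cube[OF assms] by (auto simp: eq_neg_iff_add_eq_0)
  moreover have "(3 :: 'a) = 0"
    using of_nat_CHAR[where 'a = 'a] CHAR_eq_3_if_card_UNIV_eq_power[OF assms] by simp
  then have "(-1 :: 'a) = of_nat 2"
    by (simp add: eq_neg_iff_add_eq_0 add.commute)
  ultimately show ?thesis
    using that[of 0] that[of 1] that[of 2] by auto
qed

lemma ex_abs_trace3_neq_0:
  assumes "card (UNIV :: 'a::{field,finite} set) = 3 ^ n" and "n \<ge> 1"
  shows "\<exists>d :: 'a. abs_trace3 n d \<noteq> 0"
proof -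
  define P :: "'a poly" where "P = (\<Sum>i<n. monom 1 (3 ^ i))"
  have "coeff P (3 ^ (n - 1)) = 1"
    using assms(2) by (simp add: P_def coeff_sum)
  then have "P \<noteq> 0"
    by auto
  have "degree P \<le> 3 ^ (n - 1)"
    unfolding P_def
    by (intro degree_sum_le order.trans[OF degree_monom_le]) (auto intro: power_increasing)
  moreover have "3 ^ (n - 1) < card (UNIV :: 'a set)"
    using assms by simp
  ultimately have "card {x. poly P x = 0} < card (UNIV :: 'a set)"
    using card_poly_roots_bound[OF \<open>P \<noteq> 0\<close>] by linarith
  then obtain d where "poly P d \<noteq> 0"
    by (metis (mono_tags, lifting) UNIV_eq_I less_irrefl mem_Collect_eq)
  then show ?thesis
    by (auto simp: P_def abs_trace3_def poly_sum poly_monom)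
qed

lemma xi3_cube: "xi3 ^ 3 = 1"
proof -
  have "xi3 ^ 3 = exp (of_nat 3 * (2 * pi * \<i> / 3))"
    unfolding xi3_def by (rule exp_of_nat_mult[symmetric])
  also have "\<dots> = exp (2 * of_real pi * \<i>)"
    by (simp add: mult.commute mult.left_commute)
  finally show ?thesis
    by simp
qed

lemma xi3_power_mod: "xi3 ^ k = xi3 ^ (k mod 3)"
  by (metis div_mult_mod_eq power_add power_mult power_one xi3_cube mult_1 mult.commute)

lemma xi3_power_eq_1_iff: "xi3 ^ k = 1 \<longleftrightarrow> k mod 3 = 0"
proof -
  have "Re xi3 = cos (2 * pi / 3)"
    unfolding xi3_def by (simp add: Re_exp)
  then have "xi3 \<noteq> 1"
    by (auto simp: cos_120)
  moreover from this have "xi3 ^ 2 \<noteq> 1"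
    using xi3_cube by (metis mult_1 power2_eq_square power3_eq_cube)
  moreover have "k mod 3 = 0 \<or> k mod 3 = 1 \<or> k mod 3 = 2"
    by auto
  ultimately show ?thesis
    using xi3_power_mod[of k] by auto
qed

lemma xi3_pow_of_nat:
  assumes "CHAR('a::field) = 3"
  shows "xi3_pow (of_nat k :: 'a) = xi3 ^ k"
proof -
  have "(THE j. j < 3 \<and> (of_nat j :: 'a) = of_nat k) = k mod 3"
    using assms by (intro the_equality) (auto simp: of_nat_eq_iff_cong_CHAR cong_def)
  then show ?thesis
    by (simp add: xi3_pow_def xi3_power_mod[of k])
qed

definition canonical_char :: "nat \<Rightarrow> 'a::field \<Rightarrow> complex" where
  "canonical_char n x = xi3_pow (abs_trace3 n x)"

lemma canonical_char_of_trace: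
  fixes x :: "'a::{field,finite}"
  assumes "card (UNIV :: 'a set) = 3 ^ n" and "abs_trace3 n x = of_nat k"
  shows "canonical_char n x = xi3 ^ k"
  using assms CHAR_eq_3_if_card_UNIV_eq_power[OF assms(1)]
  by (simp add: canonical_char_def xi3_pow_of_nat)

lemma canonical_char_add:
  fixes x y :: "'a::{field,finite}"
  assumes "card (UNIV :: 'a set) = 3 ^ n"
  shows "canonical_char n (x + y) = canonical_char n x * canonical_char n y"
proof -
  obtain j k where j: "abs_trace3 n x = of_nat j" and k: "abs_trace3 n y = of_nat k"
    using abs_trace3_in_prime_field[OF assms] by metis
  then have "abs_trace3 n (x + y) = of_nat (j + k)"
    by (simp add: abs_trace3_add[OF CHAR_eq_3_if_card_UNIV_eq_power[OF assms]])
  then have "canonical_char n (x + y) = xi3 ^ (j + k)"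
    by (rule canonical_char_of_trace[OF assms])
  then show ?thesis
    by (simp add: canonical_char_of_trace[OF assms j] canonical_char_of_trace[OF assms k] power_add)
qed

lemma canonical_char_0:
  assumes "card (UNIV :: 'a::{field,finite} set) = 3 ^ n"
  shows "canonical_char n (0 :: 'a) = 1"
  using canonical_char_of_trace[OF assms, of 0 0] by (simp add: abs_trace3_def power_0_left)

lemma ex_canonical_char_neq_1:
  assumes "card (UNIV :: 'a::{field,finite} set) = 3 ^ n" and "n \<ge> 1"
  shows "\<exists>d :: 'a. canonical_char n d \<noteq> 1"
proof -
  obtain d :: 'a where "abs_trace3 n d \<noteq> 0"
    using ex_abs_trace3_neq_0[OF assms] by blast
  moreover obtain k where "k < 3" and k: "abs_trace3 n d = of_nat k"
    using abs_trace3_in_prime_field[OF assms(1)] by metis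
  ultimately have "k mod 3 \<noteq> 0"
    by (metis mod_less of_nat_0)
  then have "canonical_char n d \<noteq> 1"
    by (simp add: canonical_char_of_trace[OF assms(1) k] xi3_power_eq_1_iff)
  then show ?thesis
    by blast
qed

lemma sum_nontrivial_character_eq_0:
  fixes \<chi> :: "'a::{finite,ab_group_add} \<Rightarrow> 'b::idom"
  assumes mult: "\<And>x y. \<chi> (x + y) = \<chi> x * \<chi> y" and "\<chi> d \<noteq> 1"
  shows "(\<Sum>x\<in>UNIV. \<chi> x) = 0"
proof -
  have "(\<Sum>x\<in>UNIV. \<chi> x) = (\<Sum>x\<in>UNIV. \<chi> (x + d))"
    by (rule sum.reindex_bij_witness[of _ "\<lambda>x. x + d" "\<lambda>x. x - d"]) auto
  also have "\<dots> = (\<Sum>x\<in>UNIV. \<chi> x) * \<chi> d"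
    by (simp add: mult sum_distrib_right)
  finally have "(\<Sum>x\<in>UNIV. \<chi> x) * (\<chi> d - 1) = 0"
    by (simp add: algebra_simps)
  with \<open>\<chi> d \<noteq> 1\<close> show ?thesis
    by simp
qed

lemma sum_canonical_char_mult:
  fixes c :: "'a::{field,finite}"
  assumes "card (UNIV :: 'a set) = 3 ^ n" and "n \<ge> 1"
  shows "(\<Sum>x\<in>UNIV. canonical_char n (c * x))
       = (if c = 0 then of_nat (card (UNIV :: 'a set)) else 0)"
proof (cases "c = 0")
  case True
  then show ?thesis
    by (simp add: canonical_char_0[OF assms(1)])
next
  case False
  have "(\<Sum>x\<in>UNIV. canonical_char n (c * x)) = (\<Sum>x\<in>(UNIV :: 'a set). canonical_char n x)"
    by (rule sum.reindex_bij_witness[of _ "\<lambda>x. x / c" "\<lambda>x. c * x"]) (use False in auto)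
  also have "\<dots> = 0"
    using ex_canonical_char_neq_1[OF assms]
    by (metis sum_nontrivial_character_eq_0 canonical_char_add[OF assms(1)])
  finally show ?thesis
    using False by simp
qed

section \<open>Fourier transform and Walsh moments\<close>

definition fourier :: "nat \<Rightarrow> ('a::field \<Rightarrow> complex) \<Rightarrow> 'a \<Rightarrow> complex" where
  "fourier n u a = (\<Sum>x\<in>UNIV. u x * canonical_char n (- (a * x)))"

definition convolution :: "('a::ab_group_add \<Rightarrow> complex) \<Rightarrow> ('a \<Rightarrow> complex) \<Rightarrow> 'a \<Rightarrow> complex" where
  "convolution u v y = (\<Sum>z\<in>UNIV. u z * v (y - z))"

lemma walsh_eq_fourier:
  fixes f :: "'a::{field,finite} \<Rightarrow> 'a"
  assumes "card (UNIV :: 'a set) = 3 ^ n"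
  shows "walsh n f a b = fourier n (\<lambda>x. canonical_char n (b * f x)) a"
proof -
  have "canonical_char n (b * f x - a * x)
      = canonical_char n (b * f x) * canonical_char n (- (a * x))" for x
    using canonical_char_add[OF assms, of "b * f x" "- (a * x)"] by simp
  then show ?thesis
    by (simp add: walsh_def fourier_def flip: canonical_char_def)
qed

lemma sum_fourier:
  fixes u :: "'a::{field,finite} \<Rightarrow> complex"
  assumes "card (UNIV :: 'a set) = 3 ^ n" and "n \<ge> 1"
  shows "(\<Sum>a\<in>UNIV. fourier n u a) = of_nat (card (UNIV :: 'a set)) * u 0"
proof -
  have orthogonality: "(\<Sum>a\<in>UNIV. canonical_char n (- (a * x)))
      = (if x = 0 then of_nat (card (UNIV :: 'a set)) else 0)" for x :: 'a
    using sum_canonical_char_mult[OF assms, of "- x"] by (simp add: ac_simps)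
  have "(\<Sum>a\<in>UNIV. fourier n u a) = (\<Sum>x\<in>UNIV. u x * (\<Sum>a\<in>UNIV. canonical_char n (- (a * x))))"
    unfolding fourier_def by (subst sum.swap) (simp add: sum_distrib_left)
  also have "\<dots> = (\<Sum>x\<in>UNIV. u x * (if x = 0 then of_nat (card (UNIV :: 'a set)) else 0))"
    by (simp only: orthogonality)
  finally show ?thesis
    by (simp add: if_distrib mult.commute cong: if_cong)
qed

lemma fourier_mult:
  fixes u v :: "'a::{field,finite} \<Rightarrow> complex"
  assumes "card (UNIV :: 'a set) = 3 ^ n"
  shows "fourier n u a * fourier n v a = fourier n (convolution u v) a"
proof -
  have "fourier n u a * fourier n v a
      = (\<Sum>x\<in>UNIV. \<Sum>z\<in>UNIV. u x * v z * canonical_char n (- (a * (x + z))))"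
    unfolding fourier_def sum_product
    by (simp add: canonical_char_add[OF assms, symmetric] algebra_simps)
  also have "\<dots> = (\<Sum>x\<in>UNIV. \<Sum>y\<in>UNIV. u x * v (y - x) * canonical_char n (- (a * y)))"
  proof (rule sum.cong[OF refl])
    fix x
    show "(\<Sum>z\<in>UNIV. u x * v z * canonical_char n (- (a * (x + z))))
        = (\<Sum>y\<in>UNIV. u x * v (y - x) * canonical_char n (- (a * y)))"
      by (rule sum.reindex_bij_witness[of _ "\<lambda>y. y - x" "\<lambda>z. x + z"]) auto
  qed
  also have "\<dots> = fourier n (convolution u v) a"
    unfolding fourier_def convolution_def by (subst sum.swap) (simp add: sum_distrib_right)
  finally show ?thesis .
qed

lemma walsh_zero_right:
  fixes f :: "'a::{field,finite} \<Rightarrow> 'a"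
  assumes "card (UNIV :: 'a set) = 3 ^ n" and "n \<ge> 1"
  shows "walsh n f a 0 = (if a = 0 then of_nat (card (UNIV :: 'a set)) else 0)"
  using sum_canonical_char_mult[OF assms, of "- a"]
  by (simp add: walsh_eq_fourier[OF assms(1)] fourier_def canonical_char_0[OF assms(1)])

lemma sum_walsh:
  fixes f :: "'a::{field,finite} \<Rightarrow> 'a"
  assumes "card (UNIV :: 'a set) = 3 ^ n" and "n \<ge> 1"
  shows "(\<Sum>a\<in>UNIV. walsh n f a b) = of_nat (card (UNIV :: 'a set)) * canonical_char n (b * f 0)"
  by (simp add: walsh_eq_fourier[OF assms(1)] sum_fourier[OF assms])

lemma sum_walsh_square:
  fixes f :: "'a::{field,finite} \<Rightarrow> 'a"
  assumes "card (UNIV :: 'a set) = 3 ^ n" and "n \<ge> 1"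
  shows "(\<Sum>a\<in>UNIV. walsh n f a b ^ 2)
       = of_nat (card (UNIV :: 'a set)) * (\<Sum>x\<in>UNIV. canonical_char n (b * (f x + f (- x))))"
  by (simp add: walsh_eq_fourier[OF assms(1)] power2_eq_square fourier_mult[OF assms(1)]
      sum_fourier[OF assms] convolution_def canonical_char_add[OF assms(1)] distrib_left)

lemma sum_walsh_cube:
  fixes f :: "'a::{field,finite} \<Rightarrow> 'a"
  assumes "card (UNIV :: 'a set) = 3 ^ n" and "n \<ge> 1"
  shows "(\<Sum>a\<in>UNIV. walsh n f a b ^ 3)
       = of_nat (card (UNIV :: 'a set))
         * (\<Sum>x\<in>UNIV. \<Sum>y\<in>UNIV. canonical_char n (b * (f x + f y + f (- x - y))))"
proof -
  let ?u = "\<lambda>x. canonical_char n (b * f x)"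
  have "walsh n f a b ^ 3 = fourier n (convolution ?u (convolution ?u ?u)) a" for a
    by (simp add: walsh_eq_fourier[OF assms(1)] power3_eq_cube[unfolded mult.assoc]
        fourier_mult[OF assms(1)])
  then show ?thesis
    by (simp add: sum_fourier[OF assms] convolution_def canonical_char_add[OF assms(1)]
        distrib_left sum_distrib_left mult_ac)
qed

lemma sum_power3_minus_1:
  fixes w :: "'b \<Rightarrow> 'a::comm_ring_1"
  shows "(\<Sum>a\<in>A. (w a - 1) ^ 3)
       = (\<Sum>a\<in>A. w a ^ 3) - 3 * (\<Sum>a\<in>A. w a ^ 2) + 3 * (\<Sum>a\<in>A. w a) - of_nat (card A)"
proof -
  have "(w a - 1) ^ 3 = w a ^ 3 - 3 * w a ^ 2 + 3 * w a - 1" for a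
    by (simp add: power3_eq_cube power2_eq_square algebra_simps)
  then show ?thesis
    by (simp add: sum_subtractf sum.distrib sum_distrib_left)
qed

lemma sum_if_eq_0_else:
  fixes A B :: "'b::comm_ring_1"
  shows "(\<Sum>y\<in>(UNIV :: 'a::{finite,zero} set). if y = 0 then A else B)
       = A + (of_nat (card (UNIV :: 'a set)) - 1) * B"
proof -
  have "(\<Sum>y\<in>(UNIV :: 'a set). if y = 0 then A else B)
      = (\<Sum>y\<in>(UNIV :: 'a set). B + (if y = 0 then A - B else 0))"
    by (rule sum.cong) auto
  then show ?thesis
    by (simp add: sum.distrib algebra_simps)
qed

lemma sum_walsh_minus_1_cube:
  fixes f :: "'a::{field,finite} \<Rightarrow> 'a"
  assumes card: "card (UNIV :: 'a set) = 3 ^ n" and "n \<ge> 1"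
    and "f 0 = 0" and "\<And>x. f (- x) = - f x"
  shows "(\<Sum>a\<in>UNIV. (walsh n f a b - 1) ^ 3)
       = (\<Sum>a\<in>UNIV. walsh n f a b ^ 3) - 3 * of_nat (card (UNIV :: 'a set)) ^ 2
         + 2 * of_nat (card (UNIV :: 'a set))"
  unfolding sum_power3_minus_1 sum_walsh_square[OF assms(1,2)] sum_walsh[OF assms(1,2)]
  using assms(3,4) by (simp add: canonical_char_0[OF card] power2_eq_square)

lemma sum_walsh_zero_right_minus_1_cube:
  fixes f :: "'a::{field,finite} \<Rightarrow> 'a"
  assumes "card (UNIV :: 'a set) = 3 ^ n" and "n \<ge> 1"
  shows "(\<Sum>a\<in>UNIV. (walsh n f a 0 - 1) ^ 3)
       = (of_nat (card (UNIV :: 'a set)) - 1) ^ 3 - (of_nat (card (UNIV :: 'a set)) - 1)"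
proof -
  let ?N = "of_nat (card (UNIV :: 'a set)) :: complex"
  have "(\<Sum>a\<in>UNIV. (walsh n f a 0 - 1) ^ 3)
      = (\<Sum>a\<in>(UNIV :: 'a set). if a = 0 then (?N - 1) ^ 3 else - 1)"
    by (rule sum.cong) (simp_all add: walsh_zero_right[OF assms])
  also have "\<dots> = (?N - 1) ^ 3 + (?N - 1) * - 1"
    by (rule sum_if_eq_0_else)
  finally show ?thesis
    by simp
qed

section \<open>The power function x^(q+2)\<close>

lemma power_q_plus_2_cyclic_sum:
  fixes x y :: "'a::comm_ring_1"
  assumes "CHAR('a) = 3"
  shows "x ^ (3 ^ m + 2) + y ^ (3 ^ m + 2) + (- x - y) ^ (3 ^ m + 2)
       = (x - y) * (x ^ 3 ^ m * y - x * y ^ 3 ^ m)"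
proof -
  let ?q = "3 ^ m :: nat"
  have "odd (?q + 2)"
    by simp
  have "(- x - y) ^ (?q + 2) = (- (x + y)) ^ (?q + 2)"
    by simp
  also have "\<dots> = - ((x + y) ^ ?q * (x + y) ^ 2)"
    by (subst power_minus_odd[OF \<open>odd (?q + 2)\<close>]) (simp only: power_add)
  also have "\<dots> = - ((x ^ ?q + y ^ ?q) * (x + y) ^ 2)"
    by (simp only: frobenius3_add[OF assms])
  finally have neg: "(- x - y) ^ (?q + 2) = - ((x ^ ?q + y ^ ?q) * (x + y) ^ 2)" .
  have "x ^ (?q + 2) + y ^ (?q + 2) + (- x - y) ^ (?q + 2)
           = (x - y) * (x ^ ?q * y - x * y ^ ?q) - 3 * (x ^ ?q * x * y + x * y * y ^ ?q)"
    unfolding neg by (simp add: power_add power2_eq_square algebra_simps)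
  moreover have "(3 :: 'a) = 0"
    using of_nat_CHAR[where 'a = 'a] assms by simp
  ultimately show ?thesis
    by simp
qed

lemma power_q_plus_2_cyclic_sum_eq_0_iff:
  fixes x y :: "'a::idom"
  assumes "CHAR('a) = 3"
  shows "x ^ (3 ^ m + 2) + y ^ (3 ^ m + 2) + (- x - y) ^ (3 ^ m + 2) = 0
     \<longleftrightarrow> x ^ 3 ^ m * y = x * y ^ 3 ^ m"
  unfolding power_q_plus_2_cyclic_sum[OF assms] by (cases "x = y") auto

lemma sum_sum_walsh_cube_power_q_plus_2:
  fixes f :: "'a::{field,finite} \<Rightarrow> 'a"
  assumes f: "f = (\<lambda>x. x ^ (3 ^ m + 2))" and "m \<ge> 1"
    and card: "card (UNIV :: 'a set) = 3 ^ (2 * m)"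
  shows "(\<Sum>b\<in>UNIV. \<Sum>a\<in>UNIV. walsh (2 * m) f a b ^ 3)
       = of_nat (card (UNIV :: 'a set)) ^ 2
         * (of_nat (card (UNIV :: 'a set)) + (of_nat (card (UNIV :: 'a set)) - 1) * 3 ^ m)"
proof -
  let ?N = "of_nat (card (UNIV :: 'a set)) :: complex"
  let ?q = "3 ^ m :: nat"
  let ?g = "\<lambda>x y. f x + f y + f (- x - y)"
  have "2 * m \<ge> 1"
    using \<open>m \<ge> 1\<close> by simp
  have "CHAR('a) = 3"
    using card by (rule CHAR_eq_3_if_card_UNIV_eq_power)
  then have g_eq_0_iff: "?g x y = 0 \<longleftrightarrow> x ^ ?q * y = x * y ^ ?q" for x y
    unfolding f by (rule power_q_plus_2_cyclic_sum_eq_0_iff)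
  have "(\<Sum>b\<in>UNIV. \<Sum>a\<in>UNIV. walsh (2 * m) f a b ^ 3)
      = ?N * (\<Sum>b\<in>UNIV. \<Sum>x\<in>UNIV. \<Sum>y\<in>UNIV. canonical_char (2 * m) (?g x y * b))"
    unfolding sum_walsh_cube[OF card \<open>2 * m \<ge> 1\<close>] by (simp add: sum_distrib_left mult.commute)
  also have "\<dots> = ?N * (\<Sum>x\<in>UNIV. \<Sum>y\<in>UNIV. \<Sum>b\<in>UNIV. canonical_char (2 * m) (?g x y * b))"
    by (subst sum.swap, subst sum.swap) (rule refl)
  also have "\<dots> = ?N * (\<Sum>x\<in>UNIV. \<Sum>y\<in>UNIV. if (x :: 'a) ^ ?q * y = x * y ^ ?q then ?N else 0)"
    by (simp add: sum_canonical_char_mult[OF card \<open>2 * m \<ge> 1\<close>] g_eq_0_iff)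
  also have "\<dots> = ?N * (\<Sum>y\<in>UNIV. \<Sum>x\<in>UNIV. if (x :: 'a) ^ ?q * y = x * y ^ ?q then ?N else 0)"
    by (subst sum.swap) (rule refl)
  also have "\<dots> = ?N * (\<Sum>y\<in>UNIV. of_nat (card {x :: 'a. x ^ ?q * y = x * y ^ ?q}) * ?N)"
    by (simp flip: sum.inter_filter)
  also have "\<dots> = ?N * (\<Sum>y\<in>UNIV. (if (y :: 'a) = 0 then ?N else of_nat ?q) * ?N)"
    by (simp add: card_power_mult_eq_mult_power[OF _ \<open>m \<ge> 1\<close> card] if_distrib[of of_nat])
  also have "\<dots> = ?N * ((\<Sum>y\<in>UNIV. if (y :: 'a) = 0 then ?N else of_nat ?q) * ?N)"
    by (simp only: sum_distrib_right)
  also have "(\<Sum>y\<in>UNIV. if (y :: 'a) = 0 then ?N else of_nat ?q) = ?N + (?N - 1) * of_nat ?q"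
    by (rule sum_if_eq_0_else)
  finally show ?thesis
    by (simp add: power2_eq_square algebra_simps)
qed

lemma cube_moment_polynomial_identity:
  fixes Q :: "'a::comm_ring_1"
  shows "(Q ^ 2) ^ 2 * (Q ^ 2 + (Q ^ 2 - 1) * Q) - Q ^ 2 * (3 * (Q ^ 2) ^ 2 - 2 * Q ^ 2)
       - ((Q ^ 2 - 1) ^ 3 - (Q ^ 2 - 1))
     = Q ^ 2 * (Q ^ 2 - 1) * (Q ^ 3 - 3 * Q ^ 2 + 2)"
  by (simp add: power2_eq_square power3_eq_cube algebra_simps)

theorem proposition11:
  fixes m :: nat
    and f :: "'a::{field,finite} \<Rightarrow> 'a"
  assumes "f = (\<lambda>x. x ^ (3 ^ m + 2))"
    and "m \<ge> 1"
    and "card (UNIV::'a set) = 3 ^ (2 * m)"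
  shows "(\<Sum>a\<in>(UNIV::'a set). \<Sum>b\<in>(UNIV::'a set) - {0}.
            (walsh (2 * m) f a b - 1) ^ 3)
         = of_int ((3 ^ m) ^ 2 * ((3 ^ m) ^ 2 - 1) * ((3 ^ m) ^ 3 - 3 * (3 ^ m) ^ 2 + 2))"
proof -
  let ?N = "of_nat (card (UNIV :: 'a set)) :: complex"
  let ?W = "walsh (2 * m) f"
  have card: "card (UNIV :: 'a set) = 3 ^ (2 * m)" and "2 * m \<ge> 1"
    using assms by simp_all
  have "f 0 = 0" and "\<And>x. f (- x) = - f x"
    using assms(1) by simp_all
  note column = sum_walsh_minus_1_cube[OF card \<open>2 * m \<ge> 1\<close> this]
  have "(\<Sum>a\<in>UNIV. \<Sum>b\<in>UNIV - {0}. (?W a b - 1) ^ 3)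
      = (\<Sum>b\<in>UNIV. \<Sum>a\<in>UNIV. (?W a b - 1) ^ 3) - (\<Sum>a\<in>UNIV. (?W a 0 - 1) ^ 3)"
    by (subst sum.swap) (simp add: sum_diff1)
  also have "\<dots> = (\<Sum>b\<in>UNIV. \<Sum>a\<in>UNIV. ?W a b ^ 3)
      - ?N * (3 * ?N ^ 2 - 2 * ?N) - ((?N - 1) ^ 3 - (?N - 1))"
    unfolding sum_walsh_zero_right_minus_1_cube[OF card \<open>2 * m \<ge> 1\<close>] unfolding column
    by (simp add: sum_subtractf sum.distrib algebra_simps)
  also have "\<dots> = ?N ^ 2 * (?N + (?N - 1) * 3 ^ m)
      - ?N * (3 * ?N ^ 2 - 2 * ?N) - ((?N - 1) ^ 3 - (?N - 1))"
    by (simp only: sum_sum_walsh_cube_power_q_plus_2[OF assms])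
  also have "?N = (3 ^ m) ^ 2"
    using card by (simp add: power_mult mult.commute)
  finally show ?thesis
    using cube_moment_polynomial_identity[of "3 ^ m :: complex"] by simp
qed

end
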